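(* Let $p$ be a prime, $q=p^k$, $f(x)\in\mathbb F_q[x]$ and $a\in\mathbb F_q$. Then $\sum_{s=1}^\infty N_s(f,a)x^s$ is a rational function of $x$. More precisely, let $d:=\deg\{u_s(f,a)\}_{s=1}^\infty$ and let $A:=(u_{i+j-1}(f,a))_{1\le i,j\le d+1}$ be the $(d+1)\times(d+1)$ Hankel matrix of the sequence. Then $AX=0$ has a nonzero integer solution, and for any nonzero integer solution $X=(c_d,\dots,c_1,c_0)^T$ of $AX=0$ we have $$\sum_{s=1}^{\infty}N_{s}(f,a)x^s=\frac{x}{1-qx}+\frac{\sum_{i=1}^{d}\Big(\sum_{\substack{j+k=i\\ k\ge0,\ j\ge1}}c_k\,u_j(f,a)\Big)x^i}{\sum_{i=0}^{d}c_ix^i}.$$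
   Context: $\mathbb F_q$ is the finite field with $q=p^k$ elements. For $s\ge1$, $N_s(f,a)$ is the number of $(x_1,\dots,x_s)\in\mathbb F_q^s$ with $f(x_1)+\cdots+f(x_s)=a$, and $u_s(f,a):=N_s(f,a)-q^{s-1}$. A sequence of integers $\{a_s\}_{s\ge1}$ is a linear recursion sequence if there is $g(x)=\sum_{i=0}^d k_ix^i\in\mathbb Z[x]$ with $k_d\neq0$ such that $k_0a_{j+1}+\cdots+k_da_{j+d+1}=0$ for all $j\ge0$; such $g$ is a generating polynomial. The generating polynomials form a principal ideal of $\mathbb Z[x]$ generated by a polynomial of minimal degree with coprime coefficients (the minimal polynomial); the degree of the sequence is the degree of its minimal polynomial. (It is a fact that $\{u_s(f,a)\}$ is a linear recursion sequence, so $d$ is well defined.) *)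

theory Defs
  imports "HOL-Computational_Algebra.Computational_Algebra"
begin

definition Ncount :: "('a::{finite,field}) poly \<Rightarrow> 'a \<Rightarrow> nat \<Rightarrow> nat" where
  "Ncount f a s = card {xs :: 'a list. length xs = s \<and> (\<Sum>x\<leftarrow>xs. poly f x) = a}"

text \<open>u_s(f,a) = N_s(f,a) - q^(s-1)  (only used for s >= 1)\<close>
definition ucount :: "('a::{finite,field}) poly \<Rightarrow> 'a \<Rightarrow> nat \<Rightarrow> int" where
  "ucount (f :: 'a poly) a s = int (Ncount f a s) - int (card (UNIV :: 'a set)) ^ (s - 1)"

text \<open>g is a generating polynomial of the sequence (a_s)_{s>=1}
  (the value a 0 is irrelevant): k_d \<noteq> 0 and
  k_0 a_{j+1} + ... + k_d a_{j+d+1} = 0 for all j >= 0.\<close>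
definition gen_poly :: "(nat \<Rightarrow> int) \<Rightarrow> int poly \<Rightarrow> bool" where
  "gen_poly a g \<longleftrightarrow> g \<noteq> 0 \<and>
     (\<forall>j. (\<Sum>i\<le>degree g. coeff g i * a (j + i + 1)) = 0)"

definition lin_rec_seq :: "(nat \<Rightarrow> int) \<Rightarrow> bool" where
  "lin_rec_seq a \<longleftrightarrow> (\<exists>g. gen_poly a g)"

definition seq_degree :: "(nat \<Rightarrow> int) \<Rightarrow> nat" where
  "seq_degree a = (LEAST n. \<exists>g. gen_poly a g \<and> degree g = n)"

definition Ngenfun :: "('a::{finite,field}) poly \<Rightarrow> 'a \<Rightarrow> rat fls" where
  "Ngenfun f a = fps_to_fls (Abs_fps (\<lambda>s. if s = 0 then 0 else of_nat (Ncount f a s)))"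

text \<open>Hankel system A X = 0 with A = (u_{i+j-1})_{1<=i,j<=d+1} and
  X = (c_d, ..., c_1, c_0)^T, i.e. X_j = c_{d+1-j}.\<close>
definition hankel_kernel :: "(nat \<Rightarrow> int) \<Rightarrow> nat \<Rightarrow> (nat \<Rightarrow> int) \<Rightarrow> bool" where
  "hankel_kernel u d c \<longleftrightarrow>
     (\<forall>i\<in>{1..d+1}. (\<Sum>j=1..d+1. u (i + j - 1) * c (d + 1 - j)) = 0)"

end

theory Submission
  imports Defs "HOL-Library.Cardinality"
begin

text \<open>Splitting off the first coordinate gives
  \<open>u\<^sub>s\<^sub>+\<^sub>1(f,b) = \<Sum>\<^sub>x u\<^sub>s(f, b - f x)\<close>, so the \<open>q\<close>-indexed vectors
  \<open>U\<^sub>s = (u\<^sub>s(f,b))\<^sub>b\<close> evolve under one fixed linear map. Any integer relation among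
  \<open>U\<^sub>1, \<dots>, U\<^sub>q\<^sub>+\<^sub>1\<close> therefore propagates to all shifts, so \<open>u\<close> is a linear
  recursion sequence. If \<open>c\<close> lies in the kernel of the Hankel matrix of order \<open>d + 1\<close>,
  where \<open>d\<close> is the order of some recursion of \<open>u\<close>, then the convolution
  \<open>\<Sum>\<^sub>m c\<^sub>m u\<^sub>n\<^sub>-\<^sub>m\<close> vanishes for every \<open>n > d\<close>: the Hankel equations give
  \<open>d < n \<le> 2d + 1\<close>, and the recursion pushes this to larger \<open>n\<close>. Hence
  \<open>C(x) \<Sum> u\<^sub>s x\<^sup>s\<close> is the polynomial of degree at most \<open>d\<close> appearing in the numerator,
  while \<open>\<Sum> q\<^sup>s\<^sup>-\<^sup>1 x\<^sup>s = x/(1 - qx)\<close>.\<close>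

lemma int_vectors_linearly_dependent:
  fixes v :: "'m \<Rightarrow> 'i \<Rightarrow> int"
  assumes "finite I" "finite M" "card I < card M"
  shows "\<exists>h. (\<exists>m\<in>M. h m \<noteq> 0) \<and> (\<forall>i\<in>I. (\<Sum>m\<in>M. h m * v m i) = 0)"
  using assms
proof (induction I arbitrary: M v rule: finite_induct)
  case empty
  then obtain m where "m \<in> M" by fastforce
  then show ?case by (intro exI[of _ "\<lambda>_. 1"]) auto
next
  case (insert i0 I)
  show ?case
  proof (cases "\<forall>m\<in>M. v m i0 = 0")
    case True
    from insert.IH[of M v] insert.prems insert.hyps obtain h where
      "\<exists>m\<in>M. h m \<noteq> 0" "\<forall>i\<in>I. (\<Sum>m\<in>M. h m * v m i) = 0" by auto
    with True show ?thesis by auto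
  next
    case False
    then obtain r where r: "r \<in> M" "v r i0 \<noteq> 0" by auto
    \<comment> \<open>Gaussian elimination of coordinate \<open>i0\<close> with pivot vector \<open>r\<close>.\<close>
    define w where "w m i = v r i0 * v m i - v m i0 * v r i" for m i
    have "card I < card (M - {r})" using insert r by auto
    with insert.IH[of "M - {r}" w] insert.prems obtain h' where
      h': "\<exists>m\<in>M-{r}. h' m \<noteq> 0" "\<forall>i\<in>I. (\<Sum>m\<in>M-{r}. h' m * w m i) = 0" by auto
    define h where
      "h m = (if m = r then - (\<Sum>m'\<in>M-{r}. h' m' * v m' i0) else v r i0 * h' m)" for m
    have eliminated: "(\<Sum>m\<in>M. h m * v m i) = (\<Sum>m\<in>M-{r}. h' m * w m i)" for i
    proof -
      have "(\<Sum>m\<in>M. h m * v m i) = h r * v r i + (\<Sum>m\<in>M-{r}. h m * v m i)"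
        using r insert.prems by (simp add: sum.remove)
      also have "(\<Sum>m\<in>M-{r}. h m * v m i) = (\<Sum>m\<in>M-{r}. v r i0 * h' m * v m i)"
        by (rule sum.cong) (auto simp: h_def)
      finally show ?thesis
        by (simp add: h_def w_def sum_subtractf sum_distrib_left sum_distrib_right algebra_simps)
    qed
    have "\<exists>m\<in>M. h m \<noteq> 0"
      using h'(1) r by (auto simp: h_def)
    moreover have "(\<Sum>m\<in>M. h m * v m i) = 0" if "i \<in> insert i0 I" for i
      using that eliminated h'(2) by (auto simp: w_def)
    ultimately show ?thesis by blast
  qed
qed

lemma Ncount_Suc:
  fixes f :: "('a::{finite,field}) poly"
  shows "Ncount f b (Suc s) = (\<Sum>x\<in>UNIV. Ncount f (b - poly f x) s)"
proof -
  define S where "S x = {ys :: 'a list. length ys = s \<and> (\<Sum>y\<leftarrow>ys. poly f y) = b - poly f x}" for x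
  have fin: "finite (S x)" for x
    using finite_lists_length_eq[of "UNIV :: 'a set" s] by (rule finite_subset[rotated]) (auto simp: S_def)
  have "{xs :: 'a list. length xs = Suc s \<and> (\<Sum>x\<leftarrow>xs. poly f x) = b} = (\<Union>x. (#) x ` S x)"
  proof (rule set_eqI, rule iffI)
    fix xs :: "'a list" assume "xs \<in> {xs. length xs = Suc s \<and> (\<Sum>x\<leftarrow>xs. poly f x) = b}"
    then obtain x ys where "xs = x # ys" "length ys = s" "poly f x + (\<Sum>y\<leftarrow>ys. poly f y) = b"
      by (cases xs) auto
    then show "xs \<in> (\<Union>x. (#) x ` S x)" by (auto simp: S_def algebra_simps)
  qed (auto simp: S_def)
  then have "Ncount f b (Suc s) = card (\<Union>x. (#) x ` S x)" by (simp add: Ncount_def)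
  also have "\<dots> = (\<Sum>x\<in>UNIV. card ((#) x ` S x))"
    by (rule card_UN_disjoint) (auto simp: fin)
  also have "\<dots> = (\<Sum>x\<in>UNIV. card (S x))"
    by (rule sum.cong) (auto simp: card_image)
  finally show ?thesis by (simp add: Ncount_def S_def)
qed

lemma ucount_Suc:
  fixes f :: "('a::{finite,field}) poly"
  assumes "s \<ge> 1"
  shows "ucount f b (Suc s) = (\<Sum>x\<in>UNIV. ucount f (b - poly f x) s)"
proof -
  have "int CARD('a) ^ (Suc s - 1) = (\<Sum>x\<in>(UNIV::'a set). int CARD('a) ^ (s - 1))"
    using assms by (cases s) auto
  then show ?thesis
    by (simp add: ucount_def Ncount_Suc sum_subtractf)
qed

lemma ucount_recurrence:
  fixes f :: "('a::{finite,field}) poly"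
  obtains h :: "nat \<Rightarrow> int" where "\<exists>m\<le>CARD('a). h m \<noteq> 0"
    and "\<And>t b. (\<Sum>m\<le>CARD('a). h m * ucount f b (m + 1 + t)) = 0"
proof -
  obtain h :: "nat \<Rightarrow> int" where h: "\<exists>m\<in>{..CARD('a)}. h m \<noteq> 0"
    "\<forall>b\<in>UNIV. (\<Sum>m\<le>CARD('a). h m * ucount f b (m + 1)) = 0"
    using int_vectors_linearly_dependent[of "UNIV::'a set" "{..CARD('a)}" "\<lambda>m b. ucount f b (m + 1)"]
    by auto
  have "(\<Sum>m\<le>CARD('a). h m * ucount f b (m + 1 + t)) = 0" for t b
  proof (induction t arbitrary: b)
    case 0
    then show ?case using h by simp
  next
    case (Suc t)
    have "(\<Sum>m\<le>CARD('a). h m * ucount f b (m + 1 + Suc t))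
        = (\<Sum>m\<le>CARD('a). \<Sum>x\<in>UNIV. h m * ucount f (b - poly f x) (m + 1 + t))"
      by (rule sum.cong) (auto simp: ucount_Suc sum_distrib_left)
    also have "\<dots> = (\<Sum>x\<in>UNIV. \<Sum>m\<le>CARD('a). h m * ucount f (b - poly f x) (m + 1 + t))"
      by (rule sum.swap)
    also have "\<dots> = 0" using Suc by simp
    finally show ?case .
  qed
  with h that show ?thesis by blast
qed

lemma lin_rec_seq_ucount:
  fixes f :: "('a::{finite,field}) poly"
  shows "lin_rec_seq (ucount f a)"
proof -
  obtain h :: "nat \<Rightarrow> int" where h: "\<exists>m\<le>CARD('a). h m \<noteq> 0"
     "\<And>t b. (\<Sum>m\<le>CARD('a). h m * ucount f b (m + 1 + t)) = 0"
    using ucount_recurrence by blast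
  define g where "g = (\<Sum>m\<le>CARD('a). monom (h m) m)"
  have coeff_g: "coeff g i = (if i \<le> CARD('a) then h i else 0)" for i
    by (simp add: g_def coeff_sum coeff_monom)
  have "g \<noteq> 0" using h(1) coeff_g by (metis coeff_0)
  have "degree g \<le> CARD('a)" by (rule degree_le) (auto simp: coeff_g)
  have "(\<Sum>i\<le>degree g. coeff g i * ucount f a (j + i + 1)) = 0" for j
  proof -
    have "(\<Sum>i\<le>degree g. coeff g i * ucount f a (j + i + 1))
        = (\<Sum>i\<le>CARD('a). coeff g i * ucount f a (j + i + 1))"
      by (rule sum.mono_neutral_left) (use \<open>degree g \<le> CARD('a)\<close> in \<open>auto simp: coeff_eq_0\<close>)
    also have "\<dots> = (\<Sum>m\<le>CARD('a). h m * ucount f a (m + 1 + j))"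
      by (rule sum.cong) (auto simp: coeff_g add.commute add.left_commute)
    finally show ?thesis using h(2) by simp
  qed
  with \<open>g \<noteq> 0\<close> show ?thesis by (auto simp: lin_rec_seq_def gen_poly_def)
qed

lemma gen_poly_of_seq_degree:
  assumes "lin_rec_seq u"
  obtains g where "gen_poly u g" "degree g = seq_degree u"
  using assms LeastI_ex[of "\<lambda>n. \<exists>g. gen_poly u g \<and> degree g = n"]
  unfolding lin_rec_seq_def seq_degree_def by blast

lemma hankel_kernel_reversed_gen_poly:
  assumes "gen_poly u g" "degree g = d"
  shows "hankel_kernel u d (\<lambda>m. coeff g (d - m))"
  unfolding hankel_kernel_def
proof
  fix i assume i: "i \<in> {1..d+1}"
  have "(\<Sum>j=1..d+1. u (i + j - 1) * coeff g (d - (d + 1 - j)))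
      = (\<Sum>l\<le>degree g. coeff g l * u ((i - 1) + l + 1))"
    by (rule sum.reindex_bij_witness[of _ "\<lambda>l. l + 1" "\<lambda>j. j - 1"])
       (use i assms(2) in \<open>auto intro!: arg_cong[where f=u]\<close>)
  also have "\<dots> = 0"
    using assms(1) unfolding gen_poly_def by blast
  finally show "(\<Sum>j=1..d+1. u (i + j - 1) * coeff g (d - (d + 1 - j))) = 0" .
qed

lemma hankel_kernel_convolution_eq_0:
  fixes u :: "nat \<Rightarrow> int"
  assumes g: "gen_poly u g" "degree g = d" and hk: "hankel_kernel u d c"
  shows "n > d \<Longrightarrow> (\<Sum>m\<le>d. c m * u (n - m)) = 0"
proof (induction n rule: less_induct)
  case (less n)
  show ?case
  proof (cases "n \<le> 2 * d + 1")
    case True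
    have "(\<Sum>m\<le>d. c m * u (n - m)) = (\<Sum>j=1..d+1. u ((n - d) + j - 1) * c (d + 1 - j))"
      by (rule sum.reindex_bij_witness[of _ "\<lambda>j. d + 1 - j" "\<lambda>m. d + 1 - m"])
         (use less.prems in auto)
    also have "\<dots> = 0"
      by (rule hk[unfolded hankel_kernel_def, rule_format]) (use True less.prems in auto)
    finally show ?thesis .
  next
    case False
    let ?k = "coeff g"
    have lead: "?k d \<noteq> 0" using g by (auto simp: gen_poly_def)
    have recursion: "?k d * u N = - (\<Sum>i<d. ?k i * u (N - d + i))" if "N > d" for N
    proof -
      have "(\<Sum>i\<le>d. ?k i * u (N - d + i)) = (\<Sum>i\<le>degree g. ?k i * u ((N - d - 1) + i + 1))"
        using g(2) that by (intro sum.cong refl) (auto intro!: arg_cong[where f=u])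
      also have "\<dots> = 0"
        using g(1) unfolding gen_poly_def by blast
      finally show ?thesis using that by (simp add: lessThan_Suc_atMost[symmetric] algebra_simps)
    qed
    have "?k d * (\<Sum>m\<le>d. c m * u (n - m)) = (\<Sum>m\<le>d. c m * (?k d * u (n - m)))"
      by (simp add: sum_distrib_left algebra_simps)
    also have "\<dots> = (\<Sum>m\<le>d. c m * - (\<Sum>i<d. ?k i * u (n - d + i - m)))"
      using False by (intro sum.cong refl) (auto simp: recursion intro!: sum.cong arg_cong[where f=u])
    also have "\<dots> = - (\<Sum>i<d. ?k i * (\<Sum>m\<le>d. c m * u (n - d + i - m)))"
      by (simp add: sum_distrib_left sum_negf algebra_simps sum.swap[of _ "{..<d}"])
    also have "\<dots> = 0"
      using less.IH[of "n - d + _"] False by simp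
    finally show ?thesis using lead by simp
  qed
qed

definition seq_fps :: "(nat \<Rightarrow> int) \<Rightarrow> rat fps" where
  "seq_fps u = Abs_fps (\<lambda>s. if s = 0 then 0 else of_int (u s))"

definition poly_of_coeffs :: "nat \<Rightarrow> (nat \<Rightarrow> int) \<Rightarrow> rat poly" where
  "poly_of_coeffs d c = (\<Sum>i=0..d. monom (of_int (c i)) i)"

lemma coeff_poly_of_coeffs: "coeff (poly_of_coeffs d c) i = (if i \<le> d then of_int (c i) else 0)"
  by (simp add: poly_of_coeffs_def coeff_sum coeff_monom)

lemma poly_of_coeffs_eq_0_iff: "poly_of_coeffs d c = 0 \<longleftrightarrow> (\<forall>i\<le>d. c i = 0)"
  by (metis coeff_0 coeff_poly_of_coeffs of_int_eq_0_iff poly_eqI)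

lemma fps_to_fls_poly_of_coeffs:
  "fps_to_fls (fps_of_poly (poly_of_coeffs d c)) = (\<Sum>i=0..d. of_int (c i) * fls_X ^ i)"
  unfolding poly_of_coeffs_def
  by (induction d) (simp_all add: fps_of_poly_add fps_of_poly_monom fls_times_fps_to_fls
      fps_to_fls_power flip: fps_of_int fps_to_fls_of_int)

lemma fps_to_fls_fps_of_poly_eq_0_iff: "fps_to_fls (fps_of_poly p) = 0 \<longleftrightarrow> p = 0"
  by (simp add: fps_of_poly_eq_iff[of _ 0, simplified])

lemma fps_to_fls_poly_quotient_add:
  fixes P1 Q1 P2 Q2 :: "'a::field poly"
  assumes "Q1 \<noteq> 0" "Q2 \<noteq> 0"
  shows "fps_to_fls (fps_of_poly P1) / fps_to_fls (fps_of_poly Q1)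
       + fps_to_fls (fps_of_poly P2) / fps_to_fls (fps_of_poly Q2)
       = fps_to_fls (fps_of_poly (P1 * Q2 + P2 * Q1)) / fps_to_fls (fps_of_poly (Q1 * Q2))"
  using assms
  by (simp add: add_frac_eq fps_to_fls_fps_of_poly_eq_0_iff fps_of_poly_add fps_of_poly_mult
      fls_times_fps_to_fls)

lemma hankel_kernel_times_seq_fps:
  assumes "gen_poly u g" "degree g = d" "hankel_kernel u d c"
  shows "fps_of_poly (poly_of_coeffs d c) * seq_fps u
       = fps_of_poly (poly_of_coeffs d (\<lambda>i. \<Sum>k<i. c k * u (i - k)))"
proof (rule fps_ext)
  fix n
  have "(fps_of_poly (poly_of_coeffs d c) * seq_fps u) $ n
      = (\<Sum>i<n. (if i \<le> d then of_int (c i) else 0) * of_int (u (n - i)))"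
    by (simp add: fps_mult_nth coeff_poly_of_coeffs seq_fps_def atLeast0AtMost
        lessThan_Suc_atMost[symmetric] del: of_int_mult cong: if_cong)
  also have "\<dots> = of_int (\<Sum>i\<in>{..<n} \<inter> {..d}. c i * u (n - i))"
    by (simp add: sum.inter_restrict of_int_sum if_distrib if_distribR cong: if_cong)
  also have "\<dots> = fps_of_poly (poly_of_coeffs d (\<lambda>i. \<Sum>k<i. c k * u (i - k))) $ n"
  proof (cases "n \<le> d")
    case True
    then have "{..<n} \<inter> {..d} = {..<n}" by auto
    with True show ?thesis by (simp add: coeff_poly_of_coeffs)
  next
    case False
    then have "{..<n} \<inter> {..d} = {..d}" by auto
    with False show ?thesis
      using hankel_kernel_convolution_eq_0[OF assms] by (simp add: coeff_poly_of_coeffs)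
  qed
  finally show "(fps_of_poly (poly_of_coeffs d c) * seq_fps u) $ n = \<dots>" .
qed

lemma seq_fps_eq_hankel_quotient:
  assumes "gen_poly u g" "degree g = d" "hankel_kernel u d c" "\<exists>i\<le>d. c i \<noteq> 0"
  shows "fps_to_fls (seq_fps u)
       = fps_to_fls (fps_of_poly (poly_of_coeffs d (\<lambda>i. \<Sum>k<i. c k * u (i - k))))
         / fps_to_fls (fps_of_poly (poly_of_coeffs d c))"
proof -
  have "fps_to_fls (fps_of_poly (poly_of_coeffs d c)) \<noteq> 0"
    using assms(4) by (simp add: fps_to_fls_fps_of_poly_eq_0_iff poly_of_coeffs_eq_0_iff)
  then show ?thesis
    using hankel_kernel_times_seq_fps[OF assms(1-3)]
    by (simp add: eq_divide_eq fls_times_fps_to_fls[symmetric] mult.commute)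
qed

lemma fps_to_fls_linear_poly:
  "fps_to_fls (fps_of_poly [:1, - of_nat q:]) = 1 - of_nat q * (fls_X :: 'a::field fls)"
  by (simp add: fps_of_poly_pCons fls_times_fps_to_fls fps_of_nat[symmetric] fps_to_fls_of_nat
      flip: fps_const_neg fls_of_nat)

lemma fps_to_fls_geometric:
  "fps_to_fls (Abs_fps (\<lambda>s. if s = 0 then 0 else (of_nat q :: 'a::field) ^ (s - 1)))
   = fls_X / (1 - of_nat q * fls_X)"
proof -
  let ?G = "Abs_fps (\<lambda>s. if s = 0 then 0 else (of_nat q :: 'a) ^ (s - 1))"
  have "?G * (1 - of_nat q * fps_X) = fps_X"
  proof (rule fps_ext)
    fix n
    show "(?G * (1 - of_nat q * fps_X)) $ n = fps_X $ n"
      by (cases n; cases "n - 1") (auto simp: algebra_simps fps_of_nat[symmetric])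
  qed
  then have "fps_to_fls ?G * fps_to_fls (1 - of_nat q * fps_X) = fls_X"
    by (metis fls_times_fps_to_fls[of ?G] fps_X_to_fls)
  moreover have "fps_to_fls (1 - of_nat q * fps_X) = (1 - of_nat q * fls_X :: 'a fls)"
    by (simp add: fls_times_fps_to_fls fps_to_fls_of_nat)
  moreover have "(1 - of_nat q * fls_X :: 'a fls) \<noteq> 0"
  proof
    assume "(1 - of_nat q * fls_X :: 'a fls) = 0"
    then have "fls_nth (1 - of_nat q * fls_X :: 'a fls) 0 = 0" by simp
    then show False by simp
  qed
  ultimately show ?thesis by (simp add: eq_divide_eq)
qed

lemma Ngenfun_eq_geometric_plus_ucount:
  fixes f :: "('a::{finite,field}) poly"
  shows "Ngenfun f a = fls_X / (1 - of_nat CARD('a) * fls_X) + fps_to_fls (seq_fps (ucount f a))"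
proof -
  have "Abs_fps (\<lambda>s. if s = 0 then 0 else of_nat (Ncount f a s))
      = Abs_fps (\<lambda>s. if s = 0 then 0 else (of_nat CARD('a) :: rat) ^ (s - 1)) + seq_fps (ucount f a)"
    by (rule fps_ext) (simp add: seq_fps_def ucount_def)
  then show ?thesis
    by (simp add: Ngenfun_def fps_to_fls_geometric)
qed

theorem theorem1p2:
  fixes f :: "('a::{finite,field}) poly" and a :: 'a and p k :: nat
  assumes "prime p" and "card (UNIV :: 'a set) = p ^ k"
  defines "q \<equiv> card (UNIV :: 'a set)"
  defines "u \<equiv> ucount f a"
  defines "d \<equiv> seq_degree u"
  shows "(\<exists>P Q :: rat poly. Q \<noteq> 0 \<and>
            Ngenfun f a = fps_to_fls (fps_of_poly P) / fps_to_fls (fps_of_poly Q))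
       \<and> (\<exists>c :: nat \<Rightarrow> int. (\<exists>i\<le>d. c i \<noteq> 0) \<and> hankel_kernel u d c)
       \<and> (\<forall>c :: nat \<Rightarrow> int. (\<exists>i\<le>d. c i \<noteq> 0) \<and> hankel_kernel u d c \<longrightarrow>
            Ngenfun f a =
              fls_X / (1 - of_nat q * fls_X)
              + (\<Sum>i=1..d. of_int (\<Sum>kk<i. c kk * u (i - kk)) * fls_X ^ i)
                / (\<Sum>i=0..d. of_int (c i) * fls_X ^ i))"
proof -
  obtain g where g: "gen_poly u g" "degree g = d"
    using gen_poly_of_seq_degree[OF lin_rec_seq_ucount] unfolding u_def d_def by blast
  have formula: "Ngenfun f a = fls_X / (1 - of_nat q * fls_X)
      + (\<Sum>i=1..d. of_int (\<Sum>kk<i. c kk * u (i - kk)) * fls_X ^ i)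
        / (\<Sum>i=0..d. of_int (c i) * fls_X ^ i)"
    if "\<exists>i\<le>d. c i \<noteq> 0" "hankel_kernel u d c" for c
    using Ngenfun_eq_geometric_plus_ucount[of f a] seq_fps_eq_hankel_quotient[OF g that(2,1)]
    by (simp add: fps_to_fls_poly_of_coeffs sum.atLeast_Suc_atMost q_def u_def)
  define c0 where "c0 m = coeff g (d - m)" for m
  have c0_nonzero: "\<exists>i\<le>d. c0 i \<noteq> 0"
    using g by (intro exI[of _ 0]) (auto simp: c0_def gen_poly_def)
  have c0_kernel: "hankel_kernel u d c0"
    unfolding c0_def using g by (rule hankel_kernel_reversed_gen_poly)
  define P where "P = poly_of_coeffs d (\<lambda>i. \<Sum>k<i. c0 k * u (i - k))"
  define Q where "Q = poly_of_coeffs d c0"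
  have "Q \<noteq> 0" using c0_nonzero by (simp add: Q_def poly_of_coeffs_eq_0_iff)
  have "Ngenfun f a = fps_to_fls (fps_of_poly [:0, 1:]) / fps_to_fls (fps_of_poly [:1, - of_nat q:])
      + fps_to_fls (fps_of_poly P) / fps_to_fls (fps_of_poly Q)"
    using Ngenfun_eq_geometric_plus_ucount[of f a] seq_fps_eq_hankel_quotient[OF g c0_kernel c0_nonzero]
    by (simp add: fps_to_fls_linear_poly P_def Q_def q_def u_def)
  also have "\<dots> = fps_to_fls (fps_of_poly ([:0, 1:] * Q + P * [:1, - of_nat q:]))
      / fps_to_fls (fps_of_poly ([:1, - of_nat q:] * Q))"
    by (rule fps_to_fls_poly_quotient_add) (simp_all add: \<open>Q \<noteq> 0\<close>)
  finally have "\<exists>P Q :: rat poly. Q \<noteq> 0 \<and>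
      Ngenfun f a = fps_to_fls (fps_of_poly P) / fps_to_fls (fps_of_poly Q)"
    using \<open>Q \<noteq> 0\<close> by (metis mult_eq_0_iff pCons_eq_0_iff zero_neq_one)
  with formula c0_nonzero c0_kernel show ?thesis by blast
qed

end
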